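(* Let $a>1$ be fixed. For each $w$ on the unit circle, let $D_w$ be the line $$ (a-w)z+w^3(wa-1)\overline{z}+2w^2a^2-3w(w^2+1)a+4w^2=0 $$ (the directrix of the parabola with focus $a$ tangent to the unit circle at $w$). As $w$ ranges over the unit circle, the envelope of the family of lines $\{D_w\}$ is given by the equation $$ z^2\overline{z}^2-2(a^2+2)z\overline{z}+4a(z+\overline{z})+a^4-4a^2=0. $$
   Context: The variable $z$ ranges over $\mathbb{C}\cong\mathbb{R}^2$ and $\overline{z}$ denotes its complex conjugate. The envelope of a one-parameter family of curves is the curve tangent to each member of the family. *)

theory Defs
  imports "HOL-Analysis.Analysis"
begin

definition envelope :: "(real \<Rightarrow> complex \<Rightarrow> complex) \<Rightarrow> complex set" where
  "envelope F = {z. \<exists>t. F t z = 0 \<and> ((\<lambda>s. F s z) has_vector_derivative 0) (at t)}"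

definition directrix :: "real \<Rightarrow> complex \<Rightarrow> complex \<Rightarrow> complex" where
  "directrix a w z = (of_real a - w) * z + w^3 * (w * of_real a - 1) * cnj z
     + 2 * w^2 * (of_real a)^2 - 3 * w * (w^2 + 1) * of_real a + 4 * w^2"

end

theory Submission
  imports Defs
begin

text \<open>
  Writing \<open>D w z\<close> for the left-hand side of the directrix equation, the parameter derivative
  of \<open>D (cis t) z\<close> is \<open>\<i> cis t\<close> times the complex derivative \<open>D' w z\<close> in \<open>w\<close>, so the
  envelope consists of the solutions \<open>z\<close> of \<open>D w z = D' w z = 0\<close> for unit \<open>w\<close>.  For fixed \<open>w\<close>
  this is a linear system in \<open>z\<close> and \<open>cnj z\<close>, nondegenerate for \<open>a > 1\<close>, with the unique
  solution \<open>z = 2w - a w\<^sup>2\<close>.  The quartic reads \<open>(a\<^sup>2 - \<bar>z\<bar>\<^sup>2)\<^sup>2 = 4\<bar>a - z\<bar>\<^sup>2\<close>, which describes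
  exactly the image of the unit circle under \<open>w \<mapsto> 2w - a w\<^sup>2\<close>: for \<open>z \<noteq> a\<close> the preimage
  is \<open>w = (a\<^sup>2 - \<bar>z\<bar>\<^sup>2) / (2(a - cnj z))\<close>.
\<close>

lemma mult_cnj_eq_1_iff: "w * cnj w = 1 \<longleftrightarrow> norm w = 1"
proof -
  have "w * cnj w = 1 \<longleftrightarrow> (norm w)^2 = 1"
    by (metis complex_norm_square of_real_1 of_real_eq_iff of_real_power)
  also have "\<dots> \<longleftrightarrow> norm w = 1"
    using norm_ge_zero[of w] by (smt (verit) power2_eq_1_iff)
  finally show ?thesis .
qed

lemma envelope_cis_eq:
  assumes "\<And>w z. ((\<lambda>w. G w z) has_field_derivative G' w z) (at w)"
  shows "envelope (\<lambda>t z. G (cis t) z) = {z. \<exists>w. norm w = 1 \<and> G w z = 0 \<and> G' w z = 0}"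
proof -
  have deriv: "((\<lambda>s. G (cis s) z) has_vector_derivative (\<i> * cis t * G' (cis t) z)) (at t)"
    for t z
  proof -
    have "(cis has_vector_derivative (\<i> * cis t)) (at t)"
      using has_derivative_cis[OF has_derivative_ident[of "at t"]]
      by (simp add: has_vector_derivative_def)
    from field_vector_diff_chain_at[OF this assms] show ?thesis
      by (simp add: o_def)
  qed
  have critical_iff: "((\<lambda>s. G (cis s) z) has_vector_derivative 0) (at t) \<longleftrightarrow> G' (cis t) z = 0"
    for t z
  proof -
    have "((\<lambda>s. G (cis s) z) has_vector_derivative 0) (at t) \<longleftrightarrow> \<i> * cis t * G' (cis t) z = 0"
      using vector_derivative_unique_at[OF deriv[of z t]] deriv[of z t] by metis
    then show ?thesis
      by simp
  qed
  have unit_circle: "norm w = 1 \<longleftrightarrow> (\<exists>t. w = cis t)" for w :: complex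
    by (metis complex_norm_eq_1_exp_eq cis_conv_exp norm_cis)
  show ?thesis
    unfolding envelope_def critical_iff unit_circle by blast
qed

definition directrix_deriv :: "real \<Rightarrow> complex \<Rightarrow> complex \<Rightarrow> complex" where
  "directrix_deriv a w z = - z + (4 * of_real a * w^3 - 3 * w^2) * cnj z + 4 * (of_real a)^2 * w
     - 3 * of_real a * (3 * w^2 + 1) + 8 * w"

lemma has_field_derivative_directrix:
  "((\<lambda>w. directrix a w z) has_field_derivative directrix_deriv a w z) (at w)"
  unfolding directrix_def directrix_deriv_def
  by (rule derivative_eq_intros refl | simp)+
    (simp add: algebra_simps power2_eq_square power3_eq_cube)

text \<open>The image of the unit circle is a limacon, since \<open>2w - a w\<^sup>2 = 1/a - a (w - 1/a)\<^sup>2\<close>.\<close>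

definition limacon :: "real \<Rightarrow> complex \<Rightarrow> complex" where
  "limacon a w = 2 * w - of_real a * w^2"

lemma directrix_system_det_nonzero:
  fixes w :: complex
  assumes "a > 1" and "norm w = 1"
  shows "4 * (of_real a)^2 * w + 2 * w - 3 * of_real a - 3 * of_real a * w^2 \<noteq> 0"
proof
  assume det: "4 * (of_real a)^2 * w + 2 * w - 3 * of_real a - 3 * of_real a * w^2 = 0"
  have "cnj w * (4 * (of_real a)^2 * w + 2 * w - 3 * of_real a - 3 * of_real a * w^2) =
        4 * (of_real a)^2 + 2 - 3 * of_real a * (w + cnj w)"
    using assms(2)[folded mult_cnj_eq_1_iff] by algebra
  also have "\<dots> = of_real (4 * a^2 + 2 - 6 * a * Re w)"
    by (simp add: complex_add_cnj)
  finally have "4 * a^2 + 2 - 6 * a * Re w = 0"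
    using det by (metis mult_zero_right of_real_eq_0_iff)
  moreover have "Re w \<le> 1"
    using complex_Re_le_cmod[of w] assms(2) by simp
  ultimately have "2 * (2 * a - 1) * (a - 1) \<le> 0"
    using assms(1) mult_left_mono[of "Re w" 1 "6 * a"] by (simp add: algebra_simps power2_eq_square)
  moreover have "2 * (2 * a - 1) * (a - 1) > 0"
    using assms(1) by simp
  ultimately show False
    by linarith
qed

lemma directrix_critical_iff:
  assumes "a > 1" and w: "norm w = 1"
  shows "directrix a w z = 0 \<and> directrix_deriv a w z = 0 \<longleftrightarrow> z = limacon a w"
proof -
  define A where "A = complex_of_real a"
  have wc: "w * cnj w = 1"
    using w[folded mult_cnj_eq_1_iff] .
  have cnj_limacon: "cnj (limacon a w) = 2 * cnj w - A * (cnj w)^2"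
    unfolding limacon_def A_def by simp
  have solves: "directrix a w (limacon a w) = 0" "directrix_deriv a w (limacon a w) = 0"
    unfolding directrix_def directrix_deriv_def cnj_limacon unfolding limacon_def A_def[symmetric]
    using wc by algebra+
  have unique: "z = limacon a w"
    if "directrix a w z = 0" "directrix_deriv a w z = 0"
  proof -
    define d where "d = z - limacon a w"
    define e where "e = cnj z - cnj (limacon a w)"
    have e1: "(A - w) * d + w^3 * (w * A - 1) * e = 0"
      using that(1) solves(1) unfolding d_def e_def directrix_def A_def by algebra
    have e2: "- d + (4 * A * w^3 - 3 * w^2) * e = 0"
      using that(2) solves(2) unfolding d_def e_def directrix_deriv_def A_def by algebra
    have "e * (w^2 * (4 * A^2 * w + 2 * w - 3 * A - 3 * A * w^2)) = 0"
      using e1 e2 by algebra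
    moreover have "w \<noteq> 0"
      using w by auto
    ultimately have "e = 0"
      using directrix_system_det_nonzero[OF assms] unfolding A_def by simp
    with e2 show ?thesis
      unfolding d_def by simp
  qed
  show ?thesis
    using solves unique by blast
qed

lemma limacon_quartic_eq:
  fixes z A :: complex
  shows "z^2 * (cnj z)^2 - 2 * (A^2 + 2) * z * cnj z + 4 * A * (z + cnj z) + A^4 - 4 * A^2
    = (A^2 - z * cnj z)^2 - 4 * (A - z) * (A - cnj z)"
  by algebra

lemma limacon_image_iff:
  assumes "a \<ge> 1"
  shows "(\<exists>w. norm w = 1 \<and> z = limacon a w) \<longleftrightarrow>
    (of_real a^2 - z * cnj z)^2 = 4 * (of_real a - z) * (of_real a - cnj z)"
    (is "_ \<longleftrightarrow> ?k^2 = ?rhs")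
proof
  assume "\<exists>w. norm w = 1 \<and> z = limacon a w"
  then obtain w where w: "norm w = 1" and z: "z = limacon a w"
    by blast
  have cz: "cnj z = 2 * cnj w - of_real a * (cnj w)^2"
    using z unfolding limacon_def by simp
  show "?k^2 = ?rhs"
    using w[folded mult_cnj_eq_1_iff] z cz unfolding limacon_def by algebra
next
  assume quartic: "?k^2 = ?rhs"
  define A where "A = complex_of_real a"
  show "\<exists>w. norm w = 1 \<and> z = limacon a w"
  proof (cases "z = A")
    case True
    \<comment> \<open>\<open>a\<close> is the double point of the limacon, hit by both unit \<open>w\<close> with \<open>Re w = 1 / a\<close>.\<close>
    define w where "w = Complex (1 / a) (sqrt (a^2 - 1) / a)"
    have sq: "(sqrt (a^2 - 1))^2 = a^2 - 1"
      using assms by simp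
    have "norm w = 1"
      unfolding w_def cmod_def using assms sq
      by (simp add: power_divide add_divide_distrib[symmetric])
    moreover have "z = limacon a w"
      unfolding True A_def w_def limacon_def using assms sq
      by (simp add: complex_eq_iff power2_eq_square field_simps)
    ultimately show ?thesis
      by blast
  next
    case False
    define k where "k = (A^2 - z * cnj z) / 2"
    define d where "d = A - cnj z"
    define w where "w = k / d"
    have cnj_d: "cnj d = A - z" and cnj_k: "cnj k = k"
      unfolding d_def k_def A_def by simp_all
    have nz: "d \<noteq> 0" "cnj d \<noteq> 0"
      using False unfolding cnj_d d_def A_def by (auto simp: complex_eq_iff)
    have k2: "k^2 = d * cnj d"
      using quartic unfolding cnj_d k_def d_def A_def by (simp add: power_divide mult.commute)
    have "w * cnj w = k^2 / (d * cnj d)"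
      unfolding w_def using cnj_k by (simp add: power2_eq_square)
    also have "\<dots> = 1"
      using nz k2 by simp
    finally have "norm w = 1"
      unfolding mult_cnj_eq_1_iff .
    moreover have "2 * k = A^2 - z * cnj z"
      unfolding k_def by simp
    with k2 cnj_d d_def have "z * d^2 = 2 * k * d - A * k^2"
      by algebra
    then have "z = limacon a w"
      unfolding limacon_def w_def A_def[symmetric] using nz
      by (simp add: field_simps power2_eq_square)
    ultimately show ?thesis
      by blast
  qed
qed

theorem proposition4p3:
  fixes a :: real
  assumes "a > 1"
  shows "envelope (\<lambda>t z. directrix a (cis t) z) =
    {z. z^2 * (cnj z)^2 - 2 * (of_real a^2 + 2) * z * cnj z + 4 * of_real a * (z + cnj z)
        + of_real a ^ 4 - 4 * of_real a ^ 2 = 0}"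
proof -
  have "envelope (\<lambda>t z. directrix a (cis t) z) =
      {z. \<exists>w. norm w = 1 \<and> directrix a w z = 0 \<and> directrix_deriv a w z = 0}"
    using envelope_cis_eq[OF has_field_derivative_directrix] .
  also have "\<dots> = {z. \<exists>w. norm w = 1 \<and> z = limacon a w}"
    using directrix_critical_iff[OF assms] by blast
  also have "\<dots> = {z. z^2 * (cnj z)^2 - 2 * (of_real a^2 + 2) * z * cnj z
      + 4 * of_real a * (z + cnj z) + of_real a ^ 4 - 4 * of_real a ^ 2 = 0}"
    using limacon_image_iff[of a] assms by (simp only: limacon_quartic_eq right_minus_eq)
  finally show ?thesis .
qed

end
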